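(* For $\alpha>1$, integers $k\ge1$ and $n\ge0$, $$\sum_{i=1}^n\ \sum_{k_1+k_2=k}\frac{1}{(10n+10.3-10i)^2\,(10i+0.3)^2}\cdot\frac{k!}{k_1!\,k_2!}\,(k_1+3(n+1-i))^{\alpha(k_1+3(n+1-i))}\,(k_2+3i)^{\alpha(k_2+3i)}$$ $$\le\ \frac{0.05\cdot 4^{-(\alpha-3/2)}}{1-4^{-(\alpha-1)}}\cdot\frac{(k+3(n+1))^{\alpha(k+3(n+1))}}{(10n+10.3)^2},$$ where the inner sum is over nonnegative integers $k_1,k_2$.
   Context: Convention $0^0=1$; an empty sum (when $n=0$) is $0$. *)

theory Defs
  imports Complex_Main
begin

end

theory Submission
  imports Defs
begin

(* Fix i and k1 and put a = 3(n+1-i), b = 3i, A = k1 + a, B = (k - k1) + b, so that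
   A + B = k + 3(n+1).  Each summand is estimated in two multiplicative steps.
   (1) Combinatorics over the naturals: Vandermonde and the binomial theorem give
       C(k,k1) C(a+b,a) A^A B^B <= (A+B)^(A+B), and 2 min(A,B) <= A + B gives
       2^min(A,B) A^A B^B <= (A+B)^(A+B).
   (2) Interpolation: writing u^alpha = u * u^(alpha-1) with u = A^A B^B and using the
       first bound for u and the second for u^(alpha-1) yields
       C(k,k1) A^(alpha A) B^(alpha B) <= (A+B)^(alpha(A+B)) y^min(A,B) / C(a+b,a),
       with y = 2^-(alpha-1) < 1, and C(a+b,a) >= a + b = 3(n+1).
   Summing over k1 leaves two geometric tails bounded by 4y^2/(1-y^2) = 4x/(1-x) with
   x = 4^-(alpha-1); the weights are bounded by 0.038/(10n+10.3)^2; the n outer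
   summands contribute at most n * 0.152/(3(n+1)) <= 0.1, and
   0.05 * 4^-(alpha-3/2) = 0.1 * x closes the estimate. *)

lemma binomial_term_le_power:
  fixes N j x y :: nat
  shows "(N choose j) * x ^ j * y ^ (N - j) \<le> (x + y) ^ N"
proof (cases "j \<le> N")
  case True
  then have "(N choose j) * x ^ j * y ^ (N - j) \<le> (\<Sum>i\<le>N. (N choose i) * x ^ i * y ^ (N - i))"
    by (intro member_le_sum) auto
  then show ?thesis by (simp add: binomial_ring)
qed (simp add: not_le binomial_eq_0)

lemma vandermonde_term_le:
  fixes p q j l :: nat
  shows "(p choose j) * (q choose l) \<le> (p + q) choose (j + l)"
proof -
  have "(p choose j) * (q choose (j + l - j)) \<le> (\<Sum>i\<le>j + l. (p choose i) * (q choose (j + l - i)))"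
    by (intro member_le_sum) auto
  then show ?thesis by (simp add: vandermonde)
qed

lemma coupled_power_bound:
  fixes p q j l :: nat
  assumes "j \<le> p" "l \<le> q"
  shows "(p choose j) * (q choose l) * (j + l) ^ (j + l) * (p - j + (q - l)) ^ (p - j + (q - l))
           \<le> (p + q) ^ (p + q)"
proof -
  define A where "A = j + l"
  define B where "B = p - j + (q - l)"
  have AB: "A + B = p + q" using assms unfolding A_def B_def by simp
  have "(A + B) choose A = (p + q) choose (j + l)" using AB by (simp add: A_def)
  then have "(p choose j) * (q choose l) * A ^ A * B ^ B \<le> ((A + B) choose A) * A ^ A * B ^ B"
    using vandermonde_term_le[of p j q l] by (intro mult_right_mono) auto
  also have "\<dots> \<le> (A + B) ^ (A + B)"
    using binomial_term_le_power[of "A + B" A A B] by simp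
  finally show ?thesis unfolding A_def B_def AB[unfolded A_def B_def] .
qed

(* The unbalanced factor: since 2 min(a,b) <= a + b, the smaller self-power gains
   a factor 2 per unit. *)
lemma power_self_split:
  fixes a b :: nat
  shows "2 ^ min a b * a ^ a * b ^ b \<le> (a + b) ^ (a + b)"
proof -
  have le: "2 ^ a * a ^ a * b ^ b \<le> (a + b) ^ (a + b)" if "a \<le> b" for a b :: nat
  proof -
    have "2 ^ a * a ^ a = (2 * a) ^ a" by (simp add: power_mult_distrib)
    also have "\<dots> \<le> (a + b) ^ a" using that by (intro power_mono) auto
    finally have "2 ^ a * a ^ a * b ^ b \<le> (a + b) ^ a * (a + b) ^ b"
      by (intro mult_mono power_mono) auto
    then show ?thesis by (simp add: power_add)
  qed
  show ?thesis
    using le[of a b] le[of b a] by (cases "a \<le> b") (auto simp: min_def ac_simps)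
qed

(* Interpolation between the two bounds: for alpha >= 1 the factor u is controlled by the
   first bound and u^(alpha-1) by the second, which produces the decay y^m,
   y = 2^-(alpha-1). *)
lemma powr_interpolation:
  fixes u R c g \<alpha> :: real and m :: nat
  assumes u: "u > 0" and c: "c \<ge> 0" and g: "g > 0" and \<alpha>: "\<alpha> \<ge> 1"
    and binomial: "c * g * u \<le> R" and split: "2 ^ m * u \<le> R"
  shows "c * u powr \<alpha> \<le> R powr \<alpha> * (2 powr (-(\<alpha> - 1))) ^ m / g"
proof -
  define t where "t = \<alpha> - 1"
  have t: "t \<ge> 0" and \<alpha>_eq: "\<alpha> = 1 + t" using \<alpha> by (auto simp: t_def)
  have R: "R > 0" using split u by (smt (verit) mult_pos_pos zero_less_power)
  have "u powr t \<le> (R / 2 ^ m) powr t"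
    using split u t by (intro powr_mono2) (auto simp: field_simps)
  also have "\<dots> = R powr t * (2 powr (-t)) ^ m"
  proof -
    have "(R / 2 ^ m) powr t = R powr t / (2 powr real m) powr t"
      by (simp add: powr_divide powr_realpow)
    moreover have "(2 powr (-t)) ^ m = 2 powr (real m * (-t))" by (rule powr_power) simp
    ultimately show ?thesis
      by (simp add: powr_powr powr_minus divide_inverse mult.commute)
  qed
  finally have tail: "u powr t \<le> R powr t * (2 powr (-t)) ^ m" .
  have "c * u powr \<alpha> = (c * u) * u powr t" using u by (simp add: \<alpha>_eq powr_add)
  also have "\<dots> \<le> (R / g) * (R powr t * (2 powr (-t)) ^ m)"
    using binomial tail u c g R by (intro mult_mono) (auto simp: field_simps)
  also have "\<dots> = R powr \<alpha> * (2 powr (-t)) ^ m / g" using R by (simp add: \<alpha>_eq powr_add)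
  finally show ?thesis by (simp add: t_def)
qed

lemma self_powr_eq_power_powr:
  fixes x \<alpha> :: real and n :: nat
  assumes "x > 0"
  shows "x powr (\<alpha> * real n) = (x ^ n) powr \<alpha>"
  using assms by (simp add: powr_powr powr_realpow[symmetric] mult.commute)

lemma self_power_interpolation:
  fixes \<alpha> :: real and A B c g m :: nat
  assumes \<alpha>: "\<alpha> \<ge> 1" and A: "A \<ge> 1" and B: "B \<ge> 1" and g: "g \<ge> 1"
    and binomial: "c * g * A ^ A * B ^ B \<le> (A + B) ^ (A + B)"
    and split: "2 ^ m * A ^ A * B ^ B \<le> (A + B) ^ (A + B)"
  shows "real c * real A powr (\<alpha> * real A) * real B powr (\<alpha> * real B)
           \<le> real (A + B) powr (\<alpha> * real (A + B)) * (2 powr (-(\<alpha> - 1))) ^ m / real g"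
proof -
  have A0: "real A > 0" and B0: "real B > 0" using A B by auto
  have "real (c * g * A ^ A * B ^ B) \<le> real ((A + B) ^ (A + B))"
    using binomial by (rule of_nat_mono)
  then have binomial': "real c * real g * (real A ^ A * real B ^ B) \<le> real (A + B) ^ (A + B)"
    by (simp add: mult.assoc)
  have "real (2 ^ m * A ^ A * B ^ B) \<le> real ((A + B) ^ (A + B))"
    using split by (rule of_nat_mono)
  then have split': "2 ^ m * (real A ^ A * real B ^ B) \<le> real (A + B) ^ (A + B)"
    by (simp add: mult.assoc)
  have "real c * (real A ^ A * real B ^ B) powr \<alpha>
          \<le> (real (A + B) ^ (A + B)) powr \<alpha> * (2 powr (-(\<alpha> - 1))) ^ m / real g"
    using A0 B0 g \<alpha> binomial' split' by (intro powr_interpolation) auto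
  moreover have "real A powr (\<alpha> * real A) = (real A ^ A) powr \<alpha>"
    using A0 by (rule self_powr_eq_power_powr)
  moreover have "real B powr (\<alpha> * real B) = (real B ^ B) powr \<alpha>"
    using B0 by (rule self_powr_eq_power_powr)
  moreover have "real (A + B) powr (\<alpha> * real (A + B)) = (real (A + B) ^ (A + B)) powr \<alpha>"
    using A0 by (intro self_powr_eq_power_powr) simp
  ultimately show ?thesis using A0 B0 by (simp add: powr_mult mult.assoc)
qed

(* The estimate for one summand of the inner sum (without its weight), for general
   shifts a, b >= 1: the binomial C(a+b, a) >= a + b provides the denominator. *)
lemma coupled_term_bound:
  fixes \<alpha> :: real and k j a b :: nat
  assumes \<alpha>: "\<alpha> \<ge> 1" and j: "j \<le> k" and a: "a \<ge> 1" and b: "b \<ge> 1"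
  defines "y \<equiv> 2 powr (-(\<alpha> - 1))"
  shows "real (k choose j) * (real j + real a) powr (\<alpha> * (real j + real a))
           * (real (k - j) + real b) powr (\<alpha> * (real (k - j) + real b))
         \<le> (real k + real (a + b)) powr (\<alpha> * (real k + real (a + b)))
           * (y ^ (j + a) + y ^ (k - j + b)) / real (a + b)"
proof -
  define A where "A = j + a"
  define B where "B = k - j + b"
  define g where "g = (a + b) choose a"
  have AB: "A + B = k + (a + b)" using j by (simp add: A_def B_def)
  have g_ge: "a + b \<le> g" unfolding g_def using a b by (intro upper_le_binomial) auto
  have "(k choose j) * g * A ^ A * B ^ B \<le> (k + (a + b)) ^ (k + (a + b))"
    using coupled_power_bound[of j k a "a + b"] j unfolding g_def A_def B_def by simp
  then have binomial: "(k choose j) * g * A ^ A * B ^ B \<le> (A + B) ^ (A + B)" unfolding AB .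
  have split: "2 ^ min A B * A ^ A * B ^ B \<le> (A + B) ^ (A + B)"
    by (rule power_self_split)
  have "real (k choose j) * real A powr (\<alpha> * real A) * real B powr (\<alpha> * real B)
          \<le> real (A + B) powr (\<alpha> * real (A + B)) * y ^ min A B / real g"
    unfolding y_def using \<alpha> a b g_ge binomial split
    by (intro self_power_interpolation) (auto simp: A_def B_def)
  also have "\<dots> \<le> real (A + B) powr (\<alpha> * real (A + B)) * (y ^ A + y ^ B) / real (a + b)"
  proof -
    have "y ^ min A B \<le> y ^ A + y ^ B" by (cases "A \<le> B") (auto simp: min_def y_def)
    then show ?thesis using g_ge a by (intro frac_le mult_left_mono) (auto simp: y_def)
  qed
  finally have bound: "real (k choose j) * real A powr (\<alpha> * real A) * real B powr (\<alpha> * real B)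
      \<le> real (A + B) powr (\<alpha> * real (A + B)) * (y ^ A + y ^ B) / real (a + b)" .
  have casts: "real A = real j + real a" "real B = real (k - j) + real b"
    "real (A + B) = real k + real (a + b)"
    unfolding AB using j by (simp_all add: A_def B_def)
  show ?thesis using bound unfolding casts unfolding A_def B_def .
qed

lemma geometric_tails_sum:
  fixes y :: real and k a b :: nat
  assumes "0 \<le> y" "y < 1"
  shows "(\<Sum>j = 0..k. y ^ (j + a) + y ^ (k - j + b)) \<le> (y ^ a + y ^ b) / (1 - y)"
proof -
  have tail: "(\<Sum>j = 0..k. y ^ (j + c)) \<le> y ^ c / (1 - y)" for c
  proof -
    have "(\<Sum>j = 0..k. y ^ (j + c)) = y ^ c * (\<Sum>j\<le>k. y ^ j)"
      by (simp add: atLeast0AtMost sum_distrib_left power_add mult.commute)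
    also have "\<dots> = y ^ c * ((1 - y ^ Suc k) / (1 - y))" using assms by (simp add: sum_gp0)
    also have "\<dots> \<le> y ^ c * (1 / (1 - y))" using assms
      by (intro mult_left_mono divide_right_mono) auto
    finally show ?thesis by simp
  qed
  have "(\<Sum>j = 0..k. y ^ (k - j + b)) = (\<Sum>j = 0..k. y ^ (j + b))"
    by (subst sum.atLeastAtMost_rev) simp
  then show ?thesis
    using tail[of a] tail[of b] by (simp add: sum.distrib add_divide_distrib)
qed

lemma geometric_tails_sum_le_square_ratio:
  fixes y :: real and k a b :: nat
  assumes y: "0 \<le> y" "y < 1" and ab: "a \<ge> 2" "b \<ge> 2"
  shows "(\<Sum>j = 0..k. y ^ (j + a) + y ^ (k - j + b)) \<le> 4 * y ^ 2 / (1 - y ^ 2)"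
proof -
  have "y ^ a \<le> y ^ 2" "y ^ b \<le> y ^ 2" using y ab by (auto intro: power_decreasing)
  then have "(y ^ a + y ^ b) / (1 - y) \<le> 2 * y ^ 2 / (1 - y)" using y
    by (intro divide_right_mono) auto
  also have "\<dots> = 2 * y ^ 2 * (1 + y) / ((1 - y) * (1 + y))"
    using y by simp
  also have "\<dots> = 2 * y ^ 2 * (1 + y) / (1 - y ^ 2)"
    by (simp add: power2_eq_square algebra_simps)
  also have "\<dots> \<le> 4 * y ^ 2 / (1 - y ^ 2)"
  proof (rule divide_right_mono)
    show "2 * y ^ 2 * (1 + y) \<le> 4 * y ^ 2"
      using y mult_left_mono[of "1 + y" 2 "y ^ 2"] by (simp add: mult.commute)
    show "0 \<le> 1 - y ^ 2" using y by (simp add: power_le_one)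
  qed
  finally show ?thesis by (rule order_trans[OF geometric_tails_sum[OF y]])
qed

lemma two_powr_square: "(2 powr t) ^ 2 = (4::real) powr t"
  by (simp add: power2_eq_square flip: powr_mult)

lemma constant_identity:
  fixes \<alpha> :: real
  shows "0.05 * 4 powr (-(\<alpha> - 3/2)) / (1 - 4 powr (-(\<alpha> - 1)))
           = 0.1 * (4 powr (-(\<alpha> - 1)) / (1 - 4 powr (-(\<alpha> - 1))))"
proof -
  have "(4::real) powr (-(\<alpha> - 3/2)) = 4 powr (1/2 + (-(\<alpha> - 1)))" by simp
  also have "\<dots> = 4 powr (1/2) * 4 powr (-(\<alpha> - 1))" by (rule powr_add)
  also have "(4::real) powr (1/2) = 2"
    by (simp add: powr_half_sqrt)
  finally show ?thesis by simp
qed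

(* The weights: with p = 10i + 0.3 and q = 10(n-i) + 10.3, both at least 10.3, one has
   (10n+10.3)/(pq) <= 1/p + 1/q <= 2/10.3, and (2/10.3)^2 <= 0.038. *)
lemma weight_bound:
  fixes n i :: nat
  assumes "1 \<le> i" "i \<le> n"
  shows "1 / ((10 * real n + 10.3 - 10 * real i)^2 * (10 * real i + 0.3)^2)
           \<le> 0.038 / (10 * real n + 10.3)^2"
proof -
  define p :: real where "p = 10 * real i + 0.3"
  define q :: real where "q = 10 * real n + 10.3 - 10 * real i"
  define M :: real where "M = 10 * real n + 10.3"
  have p: "p \<ge> 10.3" and q: "q \<ge> 10.3" using assms by (auto simp: p_def q_def)
  have M: "M > 0" "M \<le> p + q" by (auto simp: p_def q_def M_def)
  have "M / (p * q) \<le> (p + q) / (p * q)" using M p q by (intro divide_right_mono) auto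
  also have "\<dots> = 1 / p + 1 / q" using p q by (simp add: field_simps)
  also have "\<dots> \<le> 1 / 10.3 + 1 / 10.3" using p q by (intro add_mono divide_left_mono) auto
  finally have "M / (p * q) \<le> 2 / 10.3" by simp
  then have "(M / (p * q)) ^ 2 \<le> (2 / 10.3) ^ 2" using M p q by (intro power_mono) auto
  also have "\<dots> \<le> 0.038" by (simp add: power2_eq_square)
  finally have "M ^ 2 / (q ^ 2 * p ^ 2) \<le> 0.038"
    by (simp add: power_divide power_mult_distrib mult.commute)
  then have "1 / (q ^ 2 * p ^ 2) \<le> 0.038 / M ^ 2" using M p q by (simp add: field_simps)
  then show ?thesis unfolding p_def q_def M_def .
qed

lemma shifted_term_bound:
  fixes \<alpha> :: real and k k1 n i :: nat
  assumes \<alpha>: "\<alpha> \<ge> 1" and k1: "k1 \<le> k" and i: "1 \<le> i" "i \<le> n"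
  shows "fact k / (fact k1 * fact (k - k1))
           * (real k1 + 3 * real (n + 1 - i)) powr (\<alpha> * (real k1 + 3 * real (n + 1 - i)))
           * (real (k - k1) + 3 * real i) powr (\<alpha> * (real (k - k1) + 3 * real i))
         \<le> (real k + 3 * real (n + 1)) powr (\<alpha> * (real k + 3 * real (n + 1)))
           * ((2 powr (-(\<alpha> - 1))) ^ (k1 + 3 * (n + 1 - i))
              + (2 powr (-(\<alpha> - 1))) ^ (k - k1 + 3 * i))
           / (3 * real (n + 1))"
proof -
  have parts: "3 * (n + 1 - i) + 3 * i = 3 * (n + 1)" using i by simp
  have "1 \<le> 3 * (n + 1 - i)" "1 \<le> 3 * i" using i by auto
  from coupled_term_bound[OF \<alpha> k1 this]
  show ?thesis unfolding parts of_nat_mult of_nat_numeral binomial_fact[OF k1] .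
qed

lemma inner_sum_bound:
  fixes \<alpha> :: real and k n i :: nat
  assumes \<alpha>: "\<alpha> > 1" and i: "1 \<le> i" "i \<le> n"
  defines "x \<equiv> 4 powr (-(\<alpha> - 1))"
  shows "(\<Sum>k1 = 0..k.
            1 / ((10 * real n + 10.3 - 10 * real i)^2 * (10 * real i + 0.3)^2)
            * (fact k / (fact k1 * fact (k - k1)))
            * (real k1 + 3 * real (n + 1 - i)) powr (\<alpha> * (real k1 + 3 * real (n + 1 - i)))
            * (real (k - k1) + 3 * real i) powr (\<alpha> * (real (k - k1) + 3 * real i)))
         \<le> 0.152 / (3 * real (n + 1))
            * (x / (1 - x) * ((real k + 3 * real (n + 1)) powr (\<alpha> * (real k + 3 * real (n + 1)))
                              / (10 * real n + 10.3)^2))"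
proof -
  define y :: real where "y = 2 powr (-(\<alpha> - 1))"
  define w :: real where "w = 1 / ((10 * real n + 10.3 - 10 * real i)^2 * (10 * real i + 0.3)^2)"
  define Z :: real where "Z = (real k + 3 * real (n + 1)) powr (\<alpha> * (real k + 3 * real (n + 1)))"
  define M :: real where "M = (10 * real n + 10.3)^2"
  define D :: real where "D = 3 * real (n + 1)"
  define S where "S k1 = y ^ (k1 + 3 * (n + 1 - i)) + y ^ (k - k1 + 3 * i)" for k1
  have y: "0 \<le> y" "y < 1" using \<alpha> by (auto simp: y_def intro: powr_less_one)
  have x: "x = y ^ 2" by (simp add: x_def y_def two_powr_square)
  have w: "0 \<le> w" "w \<le> 0.038 / M" using weight_bound[OF i] by (auto simp: w_def M_def)
  have Z: "0 \<le> Z" and D: "0 < D" and M: "0 < M" by (auto simp: Z_def D_def M_def)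
  have "(\<Sum>k1 = 0..k. w * (fact k / (fact k1 * fact (k - k1)))
            * (real k1 + 3 * real (n + 1 - i)) powr (\<alpha> * (real k1 + 3 * real (n + 1 - i)))
            * (real (k - k1) + 3 * real i) powr (\<alpha> * (real (k - k1) + 3 * real i)))
        \<le> (\<Sum>k1 = 0..k. w * (Z * S k1 / D))"
  proof (rule sum_mono)
    fix k1 assume "k1 \<in> {0..k}"
    then have "fact k / (fact k1 * fact (k - k1))
           * (real k1 + 3 * real (n + 1 - i)) powr (\<alpha> * (real k1 + 3 * real (n + 1 - i)))
           * (real (k - k1) + 3 * real i) powr (\<alpha> * (real (k - k1) + 3 * real i))
         \<le> Z * S k1 / D"
      using shifted_term_bound[OF _ _ i, of \<alpha> k1 k] \<alpha> unfolding Z_def D_def S_def y_def by simp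
    from mult_left_mono[OF this w(1)] show "w * (fact k / (fact k1 * fact (k - k1)))
            * (real k1 + 3 * real (n + 1 - i)) powr (\<alpha> * (real k1 + 3 * real (n + 1 - i)))
            * (real (k - k1) + 3 * real i) powr (\<alpha> * (real (k - k1) + 3 * real i))
          \<le> w * (Z * S k1 / D)" by (simp only: mult.assoc)
  qed
  also have "\<dots> = w * Z / D * (\<Sum>k1 = 0..k. S k1)" by (simp add: sum_distrib_left mult.assoc)
  also have "\<dots> \<le> 0.038 / M * Z / D * (4 * x / (1 - x))"
  proof (rule mult_mono)
    show "w * Z / D \<le> 0.038 / M * Z / D" using w Z D by (intro divide_right_mono mult_right_mono) auto
    show "(\<Sum>k1 = 0..k. S k1) \<le> 4 * x / (1 - x)" unfolding S_def x using y i
      by (intro geometric_tails_sum_le_square_ratio) auto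
  qed (use Z D M y in \<open>auto simp: S_def intro: sum_nonneg\<close>)
  also have "\<dots> = 0.152 / D * (x / (1 - x) * (Z / M))"
  proof -
    have "x < 1" using x y by (simp add: power_less_one_iff abs_if)
    then show ?thesis using D by (simp add: M_def field_simps)
  qed
  finally show ?thesis unfolding w_def Z_def M_def D_def by simp
qed

(* Each of the n outer summands obeys the same bound, and n * 0.152/(3(n+1)) <= 0.1. *)
theorem corollaryA3:
  fixes \<alpha> :: real and k n :: nat
  assumes "\<alpha> > 1" and "k \<ge> 1"
  shows "(\<Sum>i = 1..n. \<Sum>k1 = 0..k.
            1 / ((10 * real n + 10.3 - 10 * real i)^2 * (10 * real i + 0.3)^2)
            * (fact k / (fact k1 * fact (k - k1)))
            * (real k1 + 3 * real (n + 1 - i)) powr (\<alpha> * (real k1 + 3 * real (n + 1 - i)))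
            * (real (k - k1) + 3 * real i) powr (\<alpha> * (real (k - k1) + 3 * real i)))
         \<le> (0.05 * 4 powr (-(\<alpha> - 3/2)) / (1 - 4 powr (-(\<alpha> - 1))))
            * ((real k + 3 * real (n + 1)) powr (\<alpha> * (real k + 3 * real (n + 1)))
               / (10 * real n + 10.3)^2)"
proof -
  define x :: real where "x = 4 powr (-(\<alpha> - 1))"
  define K :: real where "K = x / (1 - x)
    * ((real k + 3 * real (n + 1)) powr (\<alpha> * (real k + 3 * real (n + 1))) / (10 * real n + 10.3)^2)"
  have "x < 1" using assms(1) by (simp add: x_def powr_less_one)
  then have K: "0 \<le> K" by (simp add: K_def x_def)
  have "(\<Sum>i = 1..n. \<Sum>k1 = 0..k.
            1 / ((10 * real n + 10.3 - 10 * real i)^2 * (10 * real i + 0.3)^2)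
            * (fact k / (fact k1 * fact (k - k1)))
            * (real k1 + 3 * real (n + 1 - i)) powr (\<alpha> * (real k1 + 3 * real (n + 1 - i)))
            * (real (k - k1) + 3 * real i) powr (\<alpha> * (real (k - k1) + 3 * real i)))
        \<le> (\<Sum>i = 1..n. 0.152 / (3 * real (n + 1)) * K)"
    using inner_sum_bound[OF assms(1)] by (intro sum_mono) (simp add: K_def x_def)
  also have "\<dots> = real n / real (n + 1) * 0.152 / 3 * K" by simp
  also have "\<dots> \<le> 0.1 * K"
    using K by (intro mult_right_mono) (auto simp: field_simps)
  also have "\<dots> = (0.05 * 4 powr (-(\<alpha> - 3/2)) / (1 - 4 powr (-(\<alpha> - 1))))
            * ((real k + 3 * real (n + 1)) powr (\<alpha> * (real k + 3 * real (n + 1)))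
               / (10 * real n + 10.3)^2)"
    by (simp only: K_def x_def constant_identity mult.assoc)
  finally show ?thesis .
qed

end
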